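(* Let $K$ be a field of characteristic $0$, let $E$ be the infinite-dimensional unitary Grassmann algebra over $K$ with even part $E_0$, let $A=\begin{pmatrix} E_0 & E\\ 0 & E\end{pmatrix}$, and let $F_n(A)=K\langle x_1,\dots,x_n\rangle/(K\langle x_1,\dots,x_n\rangle\cap T(A))$. Let $n\geq 2$ be even and $m\geq n+3$. Then the polynomial \[f_{m,n+1}^{(4)}=\sum_{\sigma\in S_{n+1}}(-1)^{\sigma}[x_2,x_1,x_{\sigma(1)},x_1,\dots,x_1][x_{\sigma(2)},x_{\sigma(3)}]\cdots[x_{\sigma(n)},x_{\sigma(n+1)}],\] where each first factor is the left-normed commutator of length $m-n$ consisting of $x_2,x_1,x_{\sigma(1)}$ followed by $m-n-3$ copies of $x_1$, is not a polynomial identity of $F_n(A)$.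
   Context: All algebras are associative and unitary over $K$; $T(A)$ is the ideal of polynomial identities of $A$. $E$ is generated by anticommuting $e_1,e_2,\dots$ and $E_0$ is the span of basis products of even length. Commutators: $[a,b]=ab-ba$, $[a_1,\dots,a_k]=[[a_1,\dots,a_{k-1}],a_k]$; $(-1)^\sigma$ is the sign of $\sigma$. The polynomial has total degree $m$. *)

theory Defs
  imports Main "HOL-Library.Function_Algebras" "HOL-Library.Product_Plus"
    "HOL-Combinatorics.Permutations"
begin

text \<open>An element of E is a K-linear combination of basis monomials e_S = e_{s1}...e_{sk}
  (s1 < ... < sk), indexed by finite sets S of natural numbers (generators e_0, e_1, ...).\<close>

type_synonym 'k grass = "nat set \<Rightarrow> 'k"

definition grass_carrier :: "'k::field grass set" where
  "grass_carrier = {x. finite {S. x S \<noteq> 0} \<and> (\<forall>S. x S \<noteq> 0 \<longrightarrow> finite S)}"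

definition grass_even :: "'k::field grass set" where
  "grass_even = {x \<in> grass_carrier. \<forall>S. x S \<noteq> 0 \<longrightarrow> even (card S)}"

text \<open>Sign of e_S e_T = gsign S T * e_(S union T) for disjoint S, T.\<close>
definition gsign :: "nat set \<Rightarrow> nat set \<Rightarrow> 'k::field" where
  "gsign S T = (-1) ^ card {(s, t). s \<in> S \<and> t \<in> T \<and> t < s}"

definition gmul :: "'k::field grass \<Rightarrow> 'k grass \<Rightarrow> 'k grass" where
  "gmul x y = (\<lambda>U. \<Sum>S\<in>Pow U. gsign S (U - S) * x S * y (U - S))"

definition gone :: "'k::field grass" where
  "gone = (\<lambda>S. if S = {} then 1 else 0)"

definition gscal :: "'k::field \<Rightarrow> 'k grass \<Rightarrow> 'k grass" where
  "gscal c x = (\<lambda>S. c * x S)"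

text \<open>(a, b, c) represents the upper triangular matrix [[a, b], [0, c]].
  Addition and zero are the componentwise ones (product / function instances).\<close>

type_synonym 'k ualg = "'k grass \<times> 'k grass \<times> 'k grass"

definition A_carrier :: "'k::field ualg set" where
  "A_carrier = {(a, b, c). a \<in> grass_even \<and> b \<in> grass_carrier \<and> c \<in> grass_carrier}"

definition amul :: "'k::field ualg \<Rightarrow> 'k ualg \<Rightarrow> 'k ualg" where
  "amul X Y = (case X of (a, b, c) \<Rightarrow> case Y of (a', b', c') \<Rightarrow>
      (gmul a a', gmul a b' + gmul b c', gmul c c'))"

definition aone :: "'k::field ualg" where
  "aone = (gone, 0, gone)"

definition ascal :: "'k::field \<Rightarrow> 'k ualg \<Rightarrow> 'k ualg" where
  "ascal k X = (case X of (a, b, c) \<Rightarrow> (gscal k a, gscal k b, gscal k c))"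

definition acomm :: "'k::field ualg \<Rightarrow> 'k ualg \<Rightarrow> 'k ualg" where
  "acomm X Y = amul X Y - amul Y X"

fun lcomm :: "'k::field ualg list \<Rightarrow> 'k ualg" where
  "lcomm [] = 0"
| "lcomm (x # xs) = foldl acomm x xs"

fun aprod :: "'k::field ualg list \<Rightarrow> 'k ualg" where
  "aprod [] = aone"
| "aprod (x # xs) = amul x (aprod xs)"

text \<open>Every element of K<x_1,...,x_n> is represented by an expression built from
  variables x_i, scalars, sums and products; evaluation is the substitution homomorphism.\<close>

datatype 'k ncexpr = NVar nat | NConst 'k | NAdd "'k ncexpr" "'k ncexpr" | NMul "'k ncexpr" "'k ncexpr"

fun ncvars :: "'k ncexpr \<Rightarrow> nat set" where
  "ncvars (NVar i) = {i}"
| "ncvars (NConst c) = {}"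
| "ncvars (NAdd p q) = ncvars p \<union> ncvars q"
| "ncvars (NMul p q) = ncvars p \<union> ncvars q"

fun aeval :: "(nat \<Rightarrow> 'k::field ualg) \<Rightarrow> 'k ncexpr \<Rightarrow> 'k ualg" where
  "aeval a (NVar i) = a i"
| "aeval a (NConst c) = ascal c aone"
| "aeval a (NAdd p q) = aeval a p + aeval a q"
| "aeval a (NMul p q) = amul (aeval a p) (aeval a q)"

definition f4_val :: "nat \<Rightarrow> nat \<Rightarrow> (nat \<Rightarrow> 'k::field ualg) \<Rightarrow> 'k ualg" where
  "f4_val m n y =
    (\<Sum>\<sigma>\<in>{\<sigma>. \<sigma> permutes {1..n+1}}.
       ascal (of_int (sign \<sigma>))
         (amul (lcomm ([y 2, y 1, y (\<sigma> 1)] @ replicate (m - n - 3) (y 1)))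
               (aprod (map (\<lambda>j. acomm (y (\<sigma> (2*j))) (y (\<sigma> (2*j+1)))) [1..<n div 2 + 1]))))"

text \<open>f is a polynomial identity of F_n(A) iff for all polynomials p_1, ..., p_(n+1) in
  K<x_1,...,x_n>, f(p_1,...,p_(n+1)) lies in T(A), i.e. vanishes under every
  substitution x_i := a_i in A.\<close>

definition f4_PI_of_FnA :: "nat \<Rightarrow> nat \<Rightarrow> 'k::field itself \<Rightarrow> bool" where
  "f4_PI_of_FnA m n _ =
    (\<forall>p :: nat \<Rightarrow> 'k ncexpr. (\<forall>j\<in>{1..n+1}. ncvars (p j) \<subseteq> {1..n}) \<longrightarrow>
       (\<forall>a :: nat \<Rightarrow> 'k ualg. (\<forall>i\<in>{1..n}. a i \<in> A_carrier) \<longrightarrow>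
          f4_val m n (\<lambda>j. aeval a (p j)) = 0))"

end

theory Submission
  imports Defs
begin

text \<open>Substitute x_2^2 for the first argument and x_(j-1) for the j-th one, at matrices whose
  lower-right entries are 0 for the first argument and the generator e_j for the j-th one, chosen so
  that [y_2, y_1] is strictly upper triangular with corner of constant term 1. Bracketing a strictly
  upper triangular element with diag-part (a, c) multiplies the constant term of its corner by c - a.
  The product of the commutators [y_(\<sigma> 2i), y_(\<sigma> (2i+1))] only contributes its lower-right
  entry, which vanishes unless \<sigma> 1 = 1 and then equals 2^(n/2) sign \<sigma> e_2 ... e_(n+1), the sign
  cancelling the one in f. So the coefficient of e_2 ... e_(n+1) in the corner of f is
  \<plusminus>n! 2^(n/2) \<noteq> 0.\<close>

definition gmono :: "'k::field \<Rightarrow> nat set \<Rightarrow> 'k grass" where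
  "gmono c S = (\<lambda>T. if T = S then c else 0)"

definition ggen :: "nat \<Rightarrow> 'k::field grass" where
  "ggen a = gmono 1 {a}"

definition gcomm :: "'k::field grass \<Rightarrow> 'k grass \<Rightarrow> 'k grass" where
  "gcomm x y = gmul x y - gmul y x"

lemma gone_eq_gmono: "gone = gmono 1 {}"
  unfolding gone_def gmono_def by auto

lemma gmul_0_left [simp]: "gmul 0 x = 0"
  and gmul_0_right [simp]: "gmul x 0 = 0"
  unfolding gmul_def by auto

lemma gmul_apply_empty: "gmul x y {} = x {} * y {}"
  unfolding gmul_def gsign_def by simp

lemma gmul_gmono_gmono:
  assumes "finite S" "finite T"
  shows "gmul (gmono c S) (gmono d T) =
    (if S \<inter> T = {} then gmono (gsign S T * c * d) (S \<union> T) else 0)"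
proof
  fix U
  show "gmul (gmono c S) (gmono d T) U =
    (if S \<inter> T = {} then gmono (gsign S T * c * d) (S \<union> T) else 0) U"
  proof (cases "finite U")
    case False
    then have "U \<noteq> S \<union> T" using assms by auto
    with False show ?thesis unfolding gmul_def gmono_def by auto
  next
    case True
    have "gmul (gmono c S) (gmono d T) U =
      (\<Sum>S'\<in>Pow U. if S' = S then gsign S (U - S) * c * (if U - S = T then d else 0) else 0)"
      unfolding gmul_def gmono_def by (rule sum.cong) auto
    also have "\<dots> = (if S \<subseteq> U \<and> U - S = T then gsign S T * c * d else 0)"
      using True by (subst sum.delta) auto
    finally show ?thesis unfolding gmono_def by auto
  qed
qed

lemma gmul_gmono_apply_self:
  assumes "finite U"
  shows "gmul x (gmono c U) U = x {} * c"
proof -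
  have "gmul x (gmono c U) U = (\<Sum>S\<in>Pow U. if S = {} then x {} * c else 0)"
    unfolding gmul_def gmono_def by (rule sum.cong) (auto simp: gsign_def)
  then show ?thesis using assms by (simp add: sum.delta)
qed

lemma gsign_Un_left:
  assumes "finite S" "finite T" "finite R" "S \<inter> T = {}"
  shows "gsign (S \<union> T) R = gsign S R * gsign T R"
proof -
  have split: "{(s, t). s \<in> S \<union> T \<and> t \<in> R \<and> t < s} =
     {(s, t). s \<in> S \<and> t \<in> R \<and> t < s} \<union> {(s, t). s \<in> T \<and> t \<in> R \<and> t < s}" by auto
  have fin: "finite {(s, t). s \<in> X \<and> t \<in> R \<and> t < s}" if "finite X" for X
    by (rule finite_subset[of _ "X \<times> R"]) (use assms that in auto)
  show ?thesis unfolding gsign_def split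
    by (subst card_Un_disjoint[OF fin fin]) (use assms in \<open>auto simp: power_add\<close>)
qed

lemma gsign_Un_right:
  assumes "finite S" "finite T" "finite R" "T \<inter> R = {}"
  shows "gsign S (T \<union> R) = gsign S T * gsign S R"
proof -
  have split: "{(s, t). s \<in> S \<and> t \<in> T \<union> R \<and> t < s} =
     {(s, t). s \<in> S \<and> t \<in> T \<and> t < s} \<union> {(s, t). s \<in> S \<and> t \<in> R \<and> t < s}" by auto
  have fin: "finite {(s, t). s \<in> S \<and> t \<in> X \<and> t < s}" if "finite X" for X
    by (rule finite_subset[of _ "S \<times> X"]) (use assms that in auto)
  show ?thesis unfolding gsign_def split
    by (subst card_Un_disjoint[OF fin fin]) (use assms in \<open>auto simp: power_add\<close>)
qed

lemma gsign_insert_right: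
  "finite R \<Longrightarrow> b \<notin> R \<Longrightarrow> gsign {a} (insert b R) = gsign {a} {b} * (gsign {a} R :: 'k::field)"
  using gsign_Un_right[of "{a}" "{b}" R] by simp

lemma gsign_singletons: "gsign {a} {b} = (if b < a then -1 else (1::'k::field))"
proof -
  have "{(s, t). s \<in> {a} \<and> t \<in> {b} \<and> t < s} = (if b < a then {(a, b)} else {})" by auto
  then show ?thesis unfolding gsign_def by simp
qed

lemma gsign_singletons_swap: "a \<noteq> b \<Longrightarrow> gsign {b} {a} = - (gsign {a} {b} :: 'k::field)"
  by (auto simp: gsign_singletons)

lemma gcomm_ggen_ggen:
  assumes "a \<noteq> b"
  shows "gcomm (ggen a) (ggen b) = (gmono (2 * gsign {a} {b}) {a, b} :: 'k::field grass)"
proof -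
  have "gcomm (ggen a) (ggen b) = (gmono (gsign {a} {b} - gsign {b} {a}) {a, b} :: 'k grass)"
    using assms unfolding gcomm_def ggen_def
    by (simp add: gmul_gmono_gmono insert_commute) (auto simp: gmono_def)
  then show ?thesis using gsign_singletons_swap[OF assms, where 'k='k] by simp
qed

text \<open>For a word of distinct indices, e_(a_1) ... e_(a_k) = word_sign [a_1, ..., a_k] e_{a_1, ..., a_k}.\<close>

fun word_sign :: "nat list \<Rightarrow> 'k::field" where
  "word_sign [] = 1"
| "word_sign (a # as) = gsign {a} (set as) * word_sign as"

lemma word_sign_nonzero: "word_sign as \<noteq> (0 :: 'k::field)"
  by (induction as) (auto simp: gsign_def)

lemma word_sign_swap_adjacent:
  "distinct (xs @ a # b # ys) \<Longrightarrow> word_sign (xs @ a # b # ys) = - (word_sign (xs @ b # a # ys) :: 'k::field)"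
proof (induction xs)
  case Nil
  then have "a \<noteq> b" "a \<notin> set ys" "b \<notin> set ys" by auto
  then have "gsign {a} (insert b (set ys)) = gsign {a} {b} * (gsign {a} (set ys) :: 'k)"
    and "gsign {b} (insert a (set ys)) = - gsign {a} {b} * (gsign {b} (set ys) :: 'k)"
    by (simp_all add: gsign_insert_right[of "set ys"] gsign_singletons_swap[of a b])
  then show ?case by (simp add: mult_ac)
next
  case (Cons x xs)
  have "set (xs @ a # b # ys) = set (xs @ b # a # ys)" by auto
  then show ?case using Cons by (simp only: append_Cons word_sign.simps) simp
qed

lemma word_sign_move:
  "distinct (xs @ a # ms @ ys) \<Longrightarrow>
    word_sign (xs @ a # ms @ ys) = (-1) ^ length ms * (word_sign (xs @ ms @ a # ys) :: 'k::field)"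
proof (induction ms arbitrary: xs)
  case Nil
  then show ?case by simp
next
  case (Cons m ms)
  have "word_sign (xs @ a # m # ms @ ys) = - (word_sign ((xs @ [m]) @ a # ms @ ys) :: 'k)"
    using word_sign_swap_adjacent[of xs a m "ms @ ys"] Cons.prems by simp
  also have "\<dots> = - ((-1) ^ length ms * word_sign ((xs @ [m]) @ ms @ a # ys))"
    using Cons.IH[of "xs @ [m]"] Cons.prems by simp
  finally show ?case by simp
qed

lemma word_sign_swap:
  assumes "distinct (xs @ a # ms @ b # ys)"
  shows "word_sign (xs @ b # ms @ a # ys) = - (word_sign (xs @ a # ms @ b # ys) :: 'k::field)"
proof -
  have "word_sign (xs @ a # (ms @ [b]) @ ys) = (-1) ^ length (ms @ [b]) * (word_sign (xs @ (ms @ [b]) @ a # ys) :: 'k)"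
    by (rule word_sign_move) (use assms in auto)
  moreover have "word_sign (xs @ b # ms @ (a # ys)) = (-1) ^ length ms * (word_sign (xs @ ms @ b # a # ys) :: 'k)"
    by (rule word_sign_move) (use assms in auto)
  ultimately show ?thesis by simp
qed

lemma word_sign_transpose:
  assumes "distinct as" "a \<in> set as" "b \<in> set as" "a \<noteq> b"
  shows "word_sign (map (transpose a b) as) = - (word_sign as :: 'k::field)"
proof -
  have fixed: "map (transpose a b) zs = zs" if "a \<notin> set zs" "b \<notin> set zs" for zs
    using that by (induction zs) auto
  obtain xs ys where as: "as = xs @ a # ys" using assms(2) split_list by metis
  show ?thesis
  proof (cases "b \<in> set ys")
    case True
    then obtain ms zs where "ys = ms @ b # zs" using split_list by metis
    with as assms show ?thesis using word_sign_swap[of xs a ms b zs] by (simp add: fixed)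
  next
    case False
    then have "b \<in> set xs" using assms(3,4) as by auto
    then obtain ws ms where "xs = ws @ b # ms" using split_list by metis
    with as assms show ?thesis using word_sign_swap[of ws b ms a ys] by (simp add: fixed)
  qed
qed

lemma word_sign_map_permutes:
  assumes "distinct as" "\<sigma> permutes set as"
  shows "word_sign (map \<sigma> as) = of_int (sign \<sigma>) * (word_sign as :: 'k::field)"
  using assms(2) finite_set
proof (induction \<sigma> rule: permutes_induct)
  case id
  then show ?case by simp
next
  case (swap a b p)
  then have p: "p permutes set as" and ab: "a \<in> set as" "b \<in> set as" "a \<noteq> b" by blast+
  have "distinct (map p as)" "set (map p as) = set as"
    using permutes_inj_on[OF p] permutes_image[OF p] assms(1) by (auto simp: distinct_map)
  then have "word_sign (map (transpose a b \<circ> p) as) = - (word_sign (map p as) :: 'k)"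
    using word_sign_transpose[of "map p as" a b] ab by simp
  moreover have "sign (transpose a b \<circ> p) = - sign p"
    using ab permutes_imp_permutation[OF _ p]
    by (simp add: sign_compose sign_swap_id permutation_swap_id)
  ultimately show ?case using swap.IH by (metis mult_minus_left of_int_minus)
qed

definition pair_entries :: "(nat \<Rightarrow> nat) \<Rightarrow> nat list \<Rightarrow> nat list" where
  "pair_entries f js = concat (map (\<lambda>j. [f (2*j), f (2*j+1)]) js)"

lemma pair_entries_simps [simp]:
  "pair_entries f [] = []"
  "pair_entries f (j # js) = f (2*j) # f (2*j+1) # pair_entries f js"
  unfolding pair_entries_def by auto

lemma pair_entries_upt: "pair_entries f [1..<h+1] = map f [2..<2*h+2]"
proof (induction h)
  case (Suc h)
  have "[2..<2 * Suc h + 2] = [2..<2*h+2] @ [2*h+2, 2*h+3]"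
    by (simp add: upt_rec[of "2*h+2"] upt_add_eq_append[of 2 "2*h+2"])
  with Suc show ?case by (simp add: pair_entries_def)
qed simp

lemma prod_gcomm_ggen:
  assumes "distinct (pair_entries f js)"
  shows "foldr gmul (map (\<lambda>j. gcomm (ggen (f (2*j))) (ggen (f (2*j+1)))) js) gone =
    (gmono (2 ^ length js * word_sign (pair_entries f js)) (set (pair_entries f js)) :: 'k::field grass)"
  using assms
proof (induction js)
  case Nil
  then show ?case by (simp add: gone_eq_gmono)
next
  case (Cons j js)
  define a where "a = f (2*j)"
  define b where "b = f (2*j+1)"
  define R where "R = set (pair_entries f js)"
  define c :: 'k where "c = 2 ^ length js * word_sign (pair_entries f js)"
  have ab: "a \<noteq> b" "a \<notin> R" "b \<notin> R" "finite R"
    using Cons.prems unfolding a_def b_def R_def by auto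
  have "gsign ({a} \<union> {b}) R = (gsign {a} R * gsign {b} R :: 'k)"
    by (rule gsign_Un_left) (use ab in auto)
  then have sign_ab: "gsign {a, b} R = (gsign {a} R * gsign {b} R :: 'k)"
    by (simp only: insert_is_Un[symmetric])
  have "foldr gmul (map (\<lambda>j. gcomm (ggen (f (2*j))) (ggen (f (2*j+1)))) (j # js)) gone
      = gmul (gmono (2 * gsign {a} {b}) {a, b}) (gmono c R)"
    using Cons unfolding a_def b_def R_def c_def by (simp add: gcomm_ggen_ggen)
  also have "\<dots> = gmono (gsign {a, b} R * (2 * gsign {a} {b}) * c) ({a, b} \<union> R)"
    using ab by (simp add: gmul_gmono_gmono)
  also have "gsign {a, b} R * (2 * gsign {a} {b}) * c
      = 2 ^ length (j # js) * word_sign (pair_entries f (j # js))"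
  proof -
    have "word_sign (pair_entries f (j # js)) =
        gsign {a} (insert b R) * (gsign {b} R * word_sign (pair_entries f js) :: 'k)"
      by (simp add: a_def b_def R_def)
    moreover have "gsign {a} (insert b R) = (gsign {a} {b} * gsign {a} R :: 'k)"
      by (rule gsign_insert_right) (use ab in auto)
    ultimately show ?thesis unfolding sign_ab c_def by (simp only: length_Cons power_Suc mult_ac)
  qed
  finally show ?case by (simp add: a_def b_def R_def)
qed

definition apart :: "'k::field ualg \<Rightarrow> 'k grass" where "apart X = fst X"
definition bpart :: "'k::field ualg \<Rightarrow> 'k grass" where "bpart X = fst (snd X)"
definition cpart :: "'k::field ualg \<Rightarrow> 'k grass" where "cpart X = snd (snd X)"

lemma cpart_acomm: "cpart (acomm X Y) = gcomm (cpart X) (cpart Y)"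
  unfolding cpart_def acomm_def amul_def gcomm_def by (auto split: prod.splits)

lemma cpart_aprod: "cpart (aprod Xs) = foldr gmul (map cpart Xs) gone"
  by (induction Xs) (auto simp: cpart_def amul_def aone_def split: prod.splits)

lemma bpart_amul: "bpart (amul X Y) = gmul (apart X) (bpart Y) + gmul (bpart X) (cpart Y)"
  unfolding apart_def bpart_def cpart_def amul_def by (auto split: prod.splits)

lemma bpart_ascal: "bpart (ascal c X) S = c * bpart X S"
  by (cases X) (auto simp: ascal_def bpart_def gscal_def)

lemma bpart_sum: "bpart (\<Sum>x\<in>A. f x) S = (\<Sum>x\<in>A. bpart (f x) S)"
proof -
  have "(\<Sum>x\<in>A. g x) S = (\<Sum>x\<in>A. g x S)" for g :: "_ \<Rightarrow> 'k::field grass"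
    by (induction A rule: infinite_finite_induct) auto
  then show ?thesis unfolding bpart_def by (simp add: fst_sum snd_sum)
qed

lemma foldl_acomm_offdiag:
  assumes "apart X = 0" "cpart X = 0"
  shows "apart (foldl acomm X Zs) = 0 \<and> cpart (foldl acomm X Zs) = 0 \<and>
    bpart (foldl acomm X Zs) {} = (\<Prod>Z\<leftarrow>Zs. cpart Z {} - apart Z {}) * bpart X {}"
  using assms
proof (induction Zs arbitrary: X)
  case (Cons Z Zs)
  define \<beta> where "\<beta> = bpart X"
  have X: "X = (0, \<beta>, 0)"
    using Cons.prems unfolding \<beta>_def apart_def bpart_def cpart_def by (simp add: prod_eq_iff fun_eq_iff)
  obtain a b c where Z: "Z = (a, b, c)" by (cases Z)
  have "acomm X Z = (0, gmul \<beta> c - gmul a \<beta>, 0)"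
    unfolding X Z acomm_def amul_def by simp
  then have "apart (acomm X Z) = 0" "cpart (acomm X Z) = 0"
    "bpart (acomm X Z) {} = (cpart Z {} - apart Z {}) * bpart X {}"
    by (auto simp: X Z apart_def bpart_def cpart_def gmul_apply_empty algebra_simps)
  with Cons.IH[of "acomm X Z"] show ?case by simp
qed simp

text \<open>The witness: substitute x_2^2 for the first argument and x_(j-1) for the j-th one, then
  a_1 = diag(1, e_2), a_2 = [[1, 1], [0, e_3]] and a_i = diag(0, e_(i+1)) for i \<ge> 3.
  The arguments then evaluate to y_1 = [[1, 1 + e_3], [0, 0]] and to matrices y_j with
  lower-right entry e_j for j \<ge> 2.\<close>

definition witness_poly :: "nat \<Rightarrow> 'k::field ncexpr" where
  "witness_poly j = (if j = 1 then NMul (NVar 2) (NVar 2) else NVar (j - 1))"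

definition witness_point :: "nat \<Rightarrow> 'k::field ualg" where
  "witness_point i = (if i \<le> 2 then gone else 0, if i = 2 then gone else 0, ggen (i + 1))"

definition witness_arg :: "nat \<Rightarrow> 'k::field ualg" where
  "witness_arg j = aeval witness_point (witness_poly j)"

lemma witness_poly_vars:
  "2 \<le> n \<Longrightarrow> j \<in> {1..n+1} \<Longrightarrow> ncvars (witness_poly j) \<subseteq> {1..n}"
  by (auto simp: witness_poly_def)

lemma witness_point_in_carrier: "witness_point i \<in> A_carrier"
proof -
  have "{S. (gone :: 'k::field grass) S \<noteq> 0} = {{}}" "{S. (ggen (i + 1) :: 'k grass) S \<noteq> 0} = {{i + 1}}"
    by (auto simp: gone_def ggen_def gmono_def)
  then show ?thesis
    unfolding A_carrier_def witness_point_def grass_even_def grass_carrier_def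
    by (auto simp: gone_def ggen_def gmono_def)
qed

lemma witness_arg_1: "witness_arg 1 = (gone, gone + gmul gone (ggen 3), 0)"
proof -
  have "gmul gone gone = gone" "gmul (ggen 3) (ggen 3) = (0 :: 'k::field grass)"
    by (simp_all add: gone_eq_gmono ggen_def gmul_gmono_gmono gsign_def)
  then show ?thesis
    by (simp add: witness_arg_def witness_poly_def witness_point_def amul_def)
qed

lemma cpart_witness_arg: "2 \<le> j \<Longrightarrow> cpart (witness_arg j) = ggen j"
  by (simp add: witness_arg_def witness_poly_def witness_point_def cpart_def)

lemma first_commutator_witness:
  "apart (acomm (witness_arg 2) (witness_arg 1)) = 0"
  "cpart (acomm (witness_arg 2) (witness_arg 1)) = 0"
  "bpart (acomm (witness_arg 2) (witness_arg 1)) {} = 1"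
proof -
  have arg_2: "witness_arg 2 = (gone, 0, ggen 2)"
    by (simp add: witness_arg_def witness_poly_def witness_point_def numeral_eq_Suc)
  show "apart (acomm (witness_arg 2) (witness_arg 1)) = 0"
    "cpart (acomm (witness_arg 2) (witness_arg 1)) = 0"
    "bpart (acomm (witness_arg 2) (witness_arg 1)) {} = 1"
    unfolding arg_2 witness_arg_1 acomm_def amul_def apart_def bpart_def cpart_def
    by (simp_all add: gmul_apply_empty gone_def ggen_def gmono_def)
qed

lemma leading_commutator_witness:
  "apart (lcomm ([witness_arg 2, witness_arg 1, witness_arg s] @ replicate k (witness_arg 1))) = 0"
  "bpart (lcomm ([witness_arg 2, witness_arg 1, witness_arg 1] @ replicate k (witness_arg 1))) {}
     = (-1 :: 'k::field) ^ Suc k"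
proof -
  have lcomm_eq: "lcomm ([witness_arg 2, witness_arg 1, witness_arg t] @ replicate k (witness_arg 1)) =
      foldl acomm (acomm (witness_arg 2) (witness_arg 1)) (witness_arg t # replicate k (witness_arg 1))"
    for t :: nat
    by simp
  note offdiag = foldl_acomm_offdiag[OF first_commutator_witness(1,2)]
  show "apart (lcomm ([witness_arg 2, witness_arg 1, witness_arg s] @ replicate k (witness_arg 1))) = 0"
    unfolding lcomm_eq by (rule offdiag[THEN conjunct1])
  have "cpart (witness_arg 1) {} - apart (witness_arg 1) {} = (-1 :: 'k)"
    unfolding witness_arg_1 apart_def cpart_def by (simp add: gone_def)
  then have factors: "(\<Prod>Z\<leftarrow>witness_arg 1 # replicate k (witness_arg 1). cpart Z {} - apart Z {})
      = (-1 :: 'k) ^ Suc k"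
    by (simp only: list.map map_replicate prod_list.Cons prod_list_replicate power_Suc)
  show "bpart (lcomm ([witness_arg 2, witness_arg 1, witness_arg 1] @ replicate k (witness_arg 1))) {}
     = (-1 :: 'k) ^ Suc k"
    unfolding lcomm_eq offdiag[THEN conjunct2, THEN conjunct2] first_commutator_witness(3) factors
    by (simp only: mult_1_right)
qed

lemma cpart_aprod_acomm:
  "cpart (aprod (map (\<lambda>j. acomm (y (f (2*j))) (y (f (2*j+1)))) js)) =
    foldr gmul (map (\<lambda>j. gcomm (cpart (y (f (2*j)))) (cpart (y (f (2*j+1))))) js) gone"
  by (simp add: cpart_aprod cpart_acomm comp_def)

lemma foldr_gmul_zero: "0 \<in> set xs \<Longrightarrow> foldr gmul xs z = 0"
  by (induction xs) auto

lemma witness_pairs_vanish: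
  assumes "\<sigma> permutes {1..2*h+1}" "\<sigma> 1 \<noteq> 1"
  shows "cpart (aprod (map (\<lambda>j. acomm (witness_arg (\<sigma> (2*j))) (witness_arg (\<sigma> (2*j+1))))
    [1..<h+1])) = (0 :: 'k::field grass)"
proof -
  define g :: "nat \<Rightarrow> 'k grass"
    where "g j = gcomm (cpart (witness_arg (\<sigma> (2*j)))) (cpart (witness_arg (\<sigma> (2*j+1))))" for j
  have "1 \<in> \<sigma> ` {1..2*h+1}"
    using permutes_image[OF assms(1)] by simp
  then obtain i where i: "i \<in> {1..2*h+1}" "\<sigma> i = 1" by (metis imageE)
  then have "i \<noteq> 1" using assms(2) by blast
  with i(1) have "i div 2 \<in> set [1..<h+1]" by auto
  moreover have "g (i div 2) = 0"
  proof -
    have "i = 2 * (i div 2) \<or> i = 2 * (i div 2) + 1"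
      by presburger
    then have "\<sigma> (2 * (i div 2)) = 1 \<or> \<sigma> (2 * (i div 2) + 1) = 1"
      using i(2) by (elim disjE) (simp_all only: simp_thms)
    moreover have "cpart (witness_arg 1) = (0 :: 'k grass)"
      unfolding witness_arg_1 cpart_def by simp
    ultimately show ?thesis
      unfolding g_def gcomm_def by (elim disjE) (simp_all only: gmul_0_left gmul_0_right diff_self)
  qed
  ultimately have "0 \<in> set (map g [1..<h+1])"
    by (metis image_eqI set_map)
  then show ?thesis unfolding cpart_aprod_acomm g_def by (rule foldr_gmul_zero)
qed

lemma witness_pairs_monomial:
  assumes "\<sigma> permutes {2..2*h+1}"
  shows "cpart (aprod (map (\<lambda>j. acomm (witness_arg (\<sigma> (2*j))) (witness_arg (\<sigma> (2*j+1))))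
    [1..<h+1])) = (gmono (of_int (sign \<sigma>) * (2 ^ h * word_sign [2..<2*h+2])) {2..2*h+1} :: 'k::field grass)"
proof -
  have range: "set [2..<2*h+2] = {2..2*h+1}" by auto
  have args: "map (\<lambda>j. gcomm (cpart (witness_arg (\<sigma> (2*j)))) (cpart (witness_arg (\<sigma> (2*j+1)))))
      [1..<h+1] = map (\<lambda>j. gcomm (ggen (\<sigma> (2*j))) (ggen (\<sigma> (2*j+1))) :: 'k grass) [1..<h+1]"
  proof (rule map_cong[OF refl])
    fix j assume "j \<in> set [1..<h+1]"
    then have "2*j \<in> {2..2*h+1}" "2*j+1 \<in> {2..2*h+1}" by auto
    then have "\<sigma> (2*j) \<in> {2..2*h+1}" "\<sigma> (2*j+1) \<in> {2..2*h+1}"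
      using permutes_in_image[OF assms] by blast+
    then have "2 \<le> \<sigma> (2*j)" "2 \<le> \<sigma> (2*j+1)" by simp_all
    then show "gcomm (cpart (witness_arg (\<sigma> (2*j)))) (cpart (witness_arg (\<sigma> (2*j+1)))) =
        (gcomm (ggen (\<sigma> (2*j))) (ggen (\<sigma> (2*j+1))) :: 'k grass)"
      by (simp only: cpart_witness_arg)
  qed
  have "distinct (map \<sigma> [2..<2*h+2])"
    using permutes_inj_on[OF assms] by (simp only: distinct_map range distinct_upt simp_thms)
  moreover have "set (map \<sigma> [2..<2*h+2]) = {2..2*h+1}"
    using permutes_image[OF assms] by (simp only: set_map range)
  ultimately have "cpart (aprod (map (\<lambda>j. acomm (witness_arg (\<sigma> (2*j))) (witness_arg (\<sigma> (2*j+1))))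
      [1..<h+1])) = (gmono (2 ^ h * word_sign (map \<sigma> [2..<2*h+2])) {2..2*h+1} :: 'k grass)"
    using prod_gcomm_ggen[of \<sigma> "[1..<h+1]", where 'k='k]
    unfolding cpart_aprod_acomm args pair_entries_upt length_upt by simp
  moreover have "word_sign (map \<sigma> [2..<2*h+2]) = of_int (sign \<sigma>) * (word_sign [2..<2*h+2] :: 'k)"
    by (rule word_sign_map_permutes) (use assms range in auto)
  ultimately show ?thesis by (simp only: mult.left_commute)
qed

lemma bpart_f4_term_witness:
  assumes "\<sigma> permutes {1..2*h+1}"
  shows "bpart (ascal (of_int (sign \<sigma>))
      (amul (lcomm ([witness_arg 2, witness_arg 1, witness_arg (\<sigma> 1)] @ replicate k (witness_arg 1)))
        (aprod (map (\<lambda>j. acomm (witness_arg (\<sigma> (2*j))) (witness_arg (\<sigma> (2*j+1)))) [1..<h+1]))))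
      {2..2*h+1}
    = (if \<sigma> permutes {2..2*h+1} then (-1) ^ Suc k * (2 ^ h * word_sign [2..<2*h+2]) else (0 :: 'k::field))"
proof -
  define L :: "'k ualg"
    where "L = lcomm ([witness_arg 2, witness_arg 1, witness_arg (\<sigma> 1)] @ replicate k (witness_arg 1))"
  define P :: "'k ualg"
    where "P = aprod (map (\<lambda>j. acomm (witness_arg (\<sigma> (2*j))) (witness_arg (\<sigma> (2*j+1)))) [1..<h+1])"
  have "bpart (amul L P) = gmul (bpart L) (cpart P)"
    unfolding bpart_amul L_def leading_commutator_witness(1) by simp
  then have bpart_term: "bpart (ascal (of_int (sign \<sigma>)) (amul L P)) {2..2*h+1}
      = of_int (sign \<sigma>) * gmul (bpart L) (cpart P) {2..2*h+1}"
    by (simp add: bpart_ascal)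
  show ?thesis
  proof (cases "\<sigma> permutes {2..2*h+1}")
    case True
    then have "\<sigma> 1 = 1" by (simp add: permutes_not_in)
    then have "bpart L {} = (-1) ^ Suc k"
      unfolding L_def using leading_commutator_witness(2) by simp
    moreover have "(of_int (sign \<sigma>) :: 'k) * of_int (sign \<sigma>) = 1"
      by (metis of_int_1 of_int_mult sign_idempotent)
    ultimately show ?thesis
      using True bpart_term witness_pairs_monomial[OF True, where 'k='k]
      unfolding L_def P_def by (simp add: gmul_gmono_apply_self mult_ac)
  next
    case False
    have "\<sigma> 1 \<noteq> 1"
    proof
      assume fixes_1: "\<sigma> 1 = 1"
      have "\<sigma> x = x" if "x \<in> {1..2*h+1} - {2..2*h+1}" for x
      proof -
        from that have "x = 1" by auto
        with fixes_1 show ?thesis by simp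
      qed
      with False show False using permutes_superset[OF assms] by blast
    qed
    then show ?thesis
      using False bpart_term witness_pairs_vanish[OF assms, where 'k='k] unfolding L_def P_def by simp
  qed
qed

lemma bpart_f4_val_witness:
  "bpart (f4_val m (2*h) witness_arg) {2..2*h+1}
    = of_nat (fact (2*h)) * ((-1) ^ Suc (m - 2*h - 3) * (2 ^ h * word_sign [2..<2*h+2]) :: 'k::field)"
proof -
  define c :: 'k where "c = (-1) ^ Suc (m - 2*h - 3) * (2 ^ h * word_sign [2..<2*h+2])"
  have perms_2: "{\<sigma> \<in> {\<sigma>. \<sigma> permutes {1..2*h+1}}. \<sigma> permutes {2..2*h+1}} = {\<sigma>. \<sigma> permutes {2..2*h+1}}"
    by (auto intro: permutes_subset)
  have "bpart (f4_val m (2*h) witness_arg) {2..2*h+1}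
      = (\<Sum>\<sigma>\<in>{\<sigma>. \<sigma> permutes {1..2*h+1}}. if \<sigma> permutes {2..2*h+1} then c else 0)"
  proof -
    have half: "2 * h div 2 = h" by simp
    show ?thesis
      unfolding f4_val_def bpart_sum c_def half
      by (intro sum.cong refl bpart_f4_term_witness) simp
  qed
  also have "\<dots> = (\<Sum>\<sigma>\<in>{\<sigma>. \<sigma> permutes {2..2*h+1}}. c)"
    unfolding perms_2[symmetric] by (rule sum.inter_filter[symmetric]) (simp add: finite_permutations)
  also have "\<dots> = of_nat (fact (2*h)) * c"
    using card_permutations[of "{2..2*h+1}" "2*h"] by simp
  finally show ?thesis unfolding c_def .
qed

theorem lemma3p8:
  fixes n m :: nat
  assumes "even n" and "n \<ge> 2" and "m \<ge> n + 3"
  shows "\<not> f4_PI_of_FnA m n TYPE('k::field_char_0)"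
proof -
  obtain h where n: "n = 2*h" using assms(1) by blast
  have "bpart (f4_val m n witness_arg) {2..n+1} \<noteq> (0 :: 'k)"
    unfolding n bpart_f4_val_witness by (simp add: word_sign_nonzero)
  then have "f4_val m n (\<lambda>j. aeval witness_point (witness_poly j)) \<noteq> (0 :: 'k ualg)"
    unfolding witness_arg_def[abs_def] by (auto simp: bpart_def)
  moreover have "\<forall>j\<in>{1..n+1}. ncvars (witness_poly j :: 'k ncexpr) \<subseteq> {1..n}"
    using assms(2) witness_poly_vars by blast
  ultimately show ?thesis
    unfolding f4_PI_of_FnA_def using witness_point_in_carrier by blast
qed

end
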